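(* Let $V$ be an irreducible module of the Clifford algebra $\mathrm{Cl}_{r,s}$, with representation $J\colon\mathrm{Cl}_{r,s}\to\mathrm{End}(V)$, $J_z^2=-\langle z,z\rangle_{\mathbb R^{r,s}}\mathrm{Id}_V$ for $z\in\mathbb R^{r,s}$, and let $\langle\cdot\,,\cdot\rangle_V\colon V\times V\to\mathbb R$ be a symmetric bilinear form satisfying $\langle J_zv,w\rangle_V+\langle v,J_zw\rangle_V=0$ for all $z\in\mathbb R^{r,s}$ and all $v,w\in V$. Then $\langle\cdot\,,\cdot\rangle_V$ is either non-degenerate or identically zero.
   Context: $\mathbb R^{r,s}$ is $\mathbb R^{r+s}$ with the symmetric bilinear form whose quadratic form is $x_1^2+\dots+x_r^2-x_{r+1}^2-\dots-x_{r+s}^2$, and $\mathrm{Cl}_{r,s}$ is the real Clifford algebra generated by $\mathbb R^{r,s}$ with relation $z^2=-\langle z,z\rangle_{\mathbb R^{r,s}}\cdot 1$. A $\mathrm{Cl}_{r,s}$-module is a real vector space with an algebra homomorphism $J\colon\mathrm{Cl}_{r,s}\to\mathrm{End}(V)$, $z\mapsto J_z$. *)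

theory Defs
  imports "HOL-Analysis.Analysis"
begin

text \<open>The pseudo-Euclidean space R^{r,s}: vectors z :: nat => real supported on
  the indices 0..r+s-1 (coordinates x_1..x_{r+s} of the paper are z 0 .. z (r+s-1)).\<close>
definition rs_space :: "nat \<Rightarrow> nat \<Rightarrow> (nat \<Rightarrow> real) set" where
  "rs_space r s = {z. \<forall>i\<ge>r+s. z i = 0}"

definition rs_quad :: "nat \<Rightarrow> nat \<Rightarrow> (nat \<Rightarrow> real) \<Rightarrow> real" where
  "rs_quad r s z = (\<Sum>i<r. (z i)^2) - (\<Sum>i\<in>{r..<r+s}. (z i)^2)"

text \<open>A Cl_{r,s}-module structure on the real vector space 'v, given (via the universal
  property of the Clifford algebra) by a linear map z |-> J z from R^{r,s} to End(V)
  with (J z)^2 = - <z,z> Id.\<close>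
definition clifford_module :: "nat \<Rightarrow> nat \<Rightarrow> ((nat \<Rightarrow> real) \<Rightarrow> 'v::real_vector \<Rightarrow> 'v) \<Rightarrow> bool" where
  "clifford_module r s J \<longleftrightarrow>
     (\<forall>z\<in>rs_space r s. linear (J z)) \<and>
     (\<forall>z\<in>rs_space r s. \<forall>z'\<in>rs_space r s. \<forall>a b::real.
        J (\<lambda>i. a * z i + b * z' i) = (\<lambda>v. a *\<^sub>R J z v + b *\<^sub>R J z' v)) \<and>
     (\<forall>z\<in>rs_space r s. \<forall>v. J z (J z v) = - (rs_quad r s z) *\<^sub>R v)"

text \<open>Irreducible: V is nonzero and its only subspaces invariant under all J z
  (equivalently, under the whole Clifford algebra, which is generated by them) are 0 and V.\<close>
definition irreducible_clifford_module :: "nat \<Rightarrow> nat \<Rightarrow> ((nat \<Rightarrow> real) \<Rightarrow> 'v::real_vector \<Rightarrow> 'v) \<Rightarrow> bool" where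
  "irreducible_clifford_module r s J \<longleftrightarrow>
     clifford_module r s J \<and> (\<exists>v::'v. v \<noteq> 0) \<and>
     (\<forall>W::'v set. subspace W \<and> (\<forall>z\<in>rs_space r s. J z ` W \<subseteq> W) \<longrightarrow> W = {0} \<or> W = UNIV)"

end

theory Submission
  imports Defs
begin

text \<open>The radical of B is a subspace which, by the skew-adjointness of the J z, is invariant
  under every J z; irreducibility leaves only the radical 0 (non-degenerate) or the radical V
  (B vanishes).\<close>

definition left_radical :: "('v::real_vector \<Rightarrow> 'v \<Rightarrow> real) \<Rightarrow> 'v set" where
  "left_radical B = {v. \<forall>w. B v w = 0}"

lemma subspace_left_radical:
  assumes "bilinear B"
  shows "subspace (left_radical B)"
proof -
  have lin: "linear (\<lambda>v. B v w)" for w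
    using assms unfolding bilinear_def by blast
  show ?thesis
    unfolding subspace_def left_radical_def
    using linear_0[OF lin] linear_add[OF lin] linear_scale[OF lin] by auto
qed

lemma skew_adjoint_image_left_radical:
  assumes "\<And>v w. B (A v) w + B v (A w) = 0"
    and "bilinear B"
  shows "A ` left_radical B \<subseteq> left_radical B"
proof
  fix x assume "x \<in> A ` left_radical B"
  then obtain v where v: "v \<in> left_radical B" and x: "x = A v" by blast
  have "B (A v) w = 0" for w
    using assms(1)[of v w] v unfolding left_radical_def by simp
  then show "x \<in> left_radical B"
    unfolding x left_radical_def by simp
qed

theorem lemma2p2:
  fixes r s :: nat
    and J :: "(nat \<Rightarrow> real) \<Rightarrow> 'v::real_vector \<Rightarrow> 'v"
    and B :: "'v \<Rightarrow> 'v \<Rightarrow> real"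
  assumes "irreducible_clifford_module r s J"
    and "bilinear B"
    and "\<And>v w. B v w = B w v"
    and "\<And>z v w. z \<in> rs_space r s \<Longrightarrow> B (J z v) w + B v (J z w) = 0"
  shows "(\<forall>v. (\<forall>w. B v w = 0) \<longrightarrow> v = 0) \<or> (\<forall>v w. B v w = 0)"
proof -
  have "\<forall>z\<in>rs_space r s. J z ` left_radical B \<subseteq> left_radical B"
    using skew_adjoint_image_left_radical[OF assms(4) assms(2)] by blast
  then have "left_radical B = {0} \<or> left_radical B = UNIV"
    using assms(1) subspace_left_radical[OF assms(2)]
    unfolding irreducible_clifford_module_def by blast
  then show ?thesis
    unfolding left_radical_def by auto
qed

end
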